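(* Consider the eigencurve setting in the context. Let $\tilde i\in\{0,\dots,I_{\max}-1\}$ and let $\lambda_j$ be an eigenvalue of $H$ with $\lambda_j\in[\mu2^{\tilde i},\mu2^{\tilde i+1})$. Then $$v_{t_{\tilde i+1},j}\le15\cdot\frac{\eta_{t_{\tilde i+1}}}{\lambda_j},$$ where $v_{t+1,j}=\sum_{k=0}^t\eta_k^2\prod_{i=k+1}^t(1-\eta_i\lambda_j)^2$ and $\eta_{t_{\tilde i+1}}=\left(L+\mu\sum_{j'=1}^{\tilde i+1}\Delta_{j'}2^{j'-1}\right)^{-1}$.
   Context: Let $H\in\mathbb{R}^{d\times d}$ be symmetric positive definite, with $\mu=\lambda_{\min}(H)$, $L=\lambda_{\max}(H)$ and $\kappa=L/\mu$. Let $I_{\max}=\log_2\kappa$, treated as an integer. Fix integers $0=t_0<\dots<t_{I_{\max}}=T$ with $\Delta_i=t_i-t_{i-1}$. The eigencurve learning rate is $$\eta_t=\frac{1}{L+\mu\sum_{j=1}^{i-1}\Delta_j2^{j-1}+2^{i-1}\mu(t-t_{i-1})}\quad\text{for }t\in[t_{i-1},t_i),$$ and at $t=t_{I_{\max}}=T$ it is given by the same formula with $i=I_{\max}$. *)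

theory Defs
  imports "HOL-Analysis.Analysis"
begin

definition is_eigenvalue :: "real^'n^'n \<Rightarrow> real \<Rightarrow> bool" where
  "is_eigenvalue H l \<longleftrightarrow> (\<exists>x. x \<noteq> 0 \<and> H *v x = l *\<^sub>R x)"

definition pos_def_mat :: "real^'n^'n \<Rightarrow> bool" where
  "pos_def_mat H \<longleftrightarrow> (\<forall>x. x \<noteq> 0 \<longrightarrow> x \<bullet> (H *v x) > 0)"

definition eigencurve_phase :: "real \<Rightarrow> real \<Rightarrow> (nat \<Rightarrow> nat) \<Rightarrow> nat \<Rightarrow> nat \<Rightarrow> real" where
  "eigencurve_phase L mu t i s =
     1 / (L + mu * (\<Sum>j=1..<i. (real (t j) - real (t (j-1))) * 2^(j-1))
            + 2^(i-1) * mu * (real s - real (t (i-1))))"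

text \<open>v_n = sum_{k=0}^{n-1} eta_k^2 prod_{i=k+1}^{n-1} (1 - eta_i lambda)^2,
  i.e. v_{t+1} in the paper's notation is vvar eta lambda (t+1).\<close>
definition vvar :: "(nat \<Rightarrow> real) \<Rightarrow> real \<Rightarrow> nat \<Rightarrow> real" where
  "vvar eta lam n = (\<Sum>k<n. (eta k)^2 * (\<Prod>i=k+1..<n. (1 - eta i * lam)^2))"

end

theory Submission
  imports Defs
begin

text \<open>The variance obeys \<open>v(m+1) = (1 - \<eta>(m) \<lambda>)\<^sup>2 v(m) + \<eta>(m)\<^sup>2\<close>, and the invariant
  \<open>v(m) \<le> 2 \<eta>(m) / \<lambda>\<close> survives a step whenever \<open>\<eta>(m) \<lambda> \<le> 1\<close> and \<open>1/\<eta>\<close> grows by at most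
  \<open>\<lambda>\<close>. Up to the end of phase \<open>itil + 1\<close> the denominator of the eigencurve step size grows by
  \<open>2^(i-1) \<mu> \<le> 2^itil \<mu> \<le> \<lambda>\<close> per step and never drops below \<open>L \<ge> \<lambda>\<close>, so the invariant
  holds there; this gives the bound even with constant 2 in place of 15.\<close>

lemma vvar_0 [simp]: "vvar eta lam 0 = 0"
  by (simp add: vvar_def)

lemma vvar_Suc: "vvar eta lam (Suc m) = (1 - eta m * lam)^2 * vvar eta lam m + (eta m)^2"
proof -
  have "(\<Sum>k<m. (eta k)^2 * (\<Prod>i=k+1..<Suc m. (1 - eta i * lam)^2))
      = (\<Sum>k<m. (1 - eta m * lam)^2 * ((eta k)^2 * (\<Prod>i=k+1..<m. (1 - eta i * lam)^2)))"
    by (intro sum.cong) (simp_all add: prod.atLeastLessThan_Suc)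
  then show ?thesis
    by (simp add: vvar_def sum_distrib_left)
qed

lemma variance_step_le:
  fixes e e' lam v :: real
  assumes lam: "lam > 0" and e: "e > 0" "e' > 0" and small: "e * lam \<le> 1"
    and growth: "1 / e' \<le> 1 / e + lam" and v: "v \<le> 2 * e / lam"
  shows "(1 - e * lam)^2 * v + e^2 \<le> 2 * e' / lam"
proof -
  define x where "x = e * lam"
  have x: "0 < x" "x \<le> 1" using lam e small by (simp_all add: x_def)
  have cubic: "(2 * (1 - x)^2 + x) * (1 + x) \<le> 2"
  proof -
    have "x * x \<le> 1 * x" using x by (intro mult_right_mono) auto
    then have "2 * x^2 \<le> 1 + x" using x unfolding power2_eq_square by linarith
    then have "x * (2 * x^2) \<le> x * (1 + x)" using x by (intro mult_left_mono) auto
    then show ?thesis by (simp add: power2_eq_square algebra_simps)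
  qed
  have e_le: "e \<le> e' * (1 + x)"
    using growth e lam by (simp add: x_def field_simps)
  have "(1 - e * lam)^2 * v + e^2 \<le> (1 - e * lam)^2 * (2 * e / lam) + e^2"
    using v by (intro add_right_mono mult_left_mono) auto
  also have "\<dots> = e / lam * (2 * (1 - x)^2 + x)"
    using lam by (simp add: x_def field_simps power2_eq_square)
  also have "\<dots> \<le> e / lam * (2 / (1 + x))"
    using cubic x e lam by (intro mult_left_mono) (simp_all add: field_simps)
  also have "\<dots> = 2 * (e / (1 + x)) / lam"
    by (simp add: mult.commute)
  also have "\<dots> \<le> 2 * e' / lam"
    using e_le x lam by (intro divide_right_mono mult_left_mono) (simp_all add: divide_le_eq mult.commute)
  finally show ?thesis .
qed

lemma vvar_le_of_reciprocal_growth: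
  fixes eta :: "nat \<Rightarrow> real"
  assumes lam: "lam > 0"
    and pos: "\<And>m. m \<le> n \<Longrightarrow> 0 < eta m"
    and small: "\<And>m. m < n \<Longrightarrow> eta m * lam \<le> 1"
    and growth: "\<And>m. m < n \<Longrightarrow> 1 / eta (Suc m) \<le> 1 / eta m + lam"
  shows "vvar eta lam n \<le> 2 * eta n / lam"
  using pos small growth
proof (induction n)
  case 0
  then show ?case using lam by simp
next
  case (Suc n)
  have "vvar eta lam n \<le> 2 * eta n / lam"
    using Suc by simp
  then show ?case
    unfolding vvar_Suc using Suc.prems lam by (intro variance_step_le) auto
qed

lemma pos_def_mat_eigenvalue_pos:
  assumes "pos_def_mat H" and "is_eigenvalue H l"
  shows "0 < l"
proof -
  obtain x where x: "x \<noteq> 0" "H *v x = l *\<^sub>R x"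
    using assms(2) unfolding is_eigenvalue_def by blast
  have "0 < x \<bullet> (H *v x)"
    using assms(1) x(1) unfolding pos_def_mat_def by blast
  then have "0 < l * (x \<bullet> x)"
    using x(2) by simp
  moreover have "0 < x \<bullet> x"
    using x(1) by simp
  ultimately show ?thesis
    by (simp add: zero_less_mult_iff)
qed

locale eigencurve_schedule =
  fixes L mu :: real and Imax T :: nat and t :: "nat \<Rightarrow> nat" and eta :: "nat \<Rightarrow> real"
  assumes mu_pos: "mu > 0" and L_pos: "L > 0"
    and t0: "t 0 = 0"
    and t_mono: "\<forall>i<Imax. t i < t (Suc i)"
    and tT: "t Imax = T"
    and eta_phase: "\<forall>i\<in>{1..Imax}. \<forall>s. t (i-1) \<le> s \<and> s < t i \<longrightarrow> eta s = eigencurve_phase L mu t i s"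
    and eta_T: "eta T = eigencurve_phase L mu t Imax T"
begin

definition phase_denom :: "nat \<Rightarrow> nat \<Rightarrow> real" where
  "phase_denom i s = L + mu * (\<Sum>j=1..<i. (real (t j) - real (t (j-1))) * 2^(j-1))
     + 2^(i-1) * mu * (real s - real (t (i-1)))"

lemma eigencurve_phase_eq: "eigencurve_phase L mu t i s = 1 / phase_denom i s"
  by (simp add: eigencurve_phase_def phase_denom_def)

lemma phase_denom_Suc: "phase_denom i (Suc s) = phase_denom i s + 2^(i-1) * mu"
  by (simp add: phase_denom_def algebra_simps)

lemma phase_denom_boundary: "phase_denom (Suc i) (t i) = phase_denom i (t i)"
  by (simp add: phase_denom_def algebra_simps)

lemma t_pred_le:
  assumes "1 \<le> j" "j \<le> Imax"
  shows "t (j-1) \<le> t j"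
proof -
  have "j - 1 < Imax" "Suc (j-1) = j"
    using assms by auto
  then show ?thesis
    using t_mono by (metis less_imp_le)
qed

lemma L_le_phase_denom:
  assumes "1 \<le> i" "i \<le> Imax" "t (i-1) \<le> s"
  shows "L \<le> phase_denom i s"
proof -
  have "0 \<le> (\<Sum>j=1..<i. (real (t j) - real (t (j-1))) * 2^(j-1))"
    using assms t_pred_le by (intro sum_nonneg) simp
  then show ?thesis
    using assms mu_pos by (simp add: phase_denom_def)
qed

lemma eta_eq_phase_denom:
  assumes i: "1 \<le> i" "i \<le> Imax" and s: "t (i-1) \<le> s" "s \<le> t i"
  shows "eta s = 1 / phase_denom i s"
proof (cases "s < t i")
  case True
  then show ?thesis
    using eta_phase i s by (simp add: eigencurve_phase_eq)
next
  case False
  then have s_eq: "s = t i"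
    using s by simp
  show ?thesis
  proof (cases "i = Imax")
    case True
    then show ?thesis
      using eta_T s_eq tT by (simp add: eigencurve_phase_eq)
  next
    case False
    then have "Suc i \<le> Imax" "t i < t (Suc i)"
      using i t_mono by auto
    then have "eta s = 1 / phase_denom (Suc i) s"
      using eta_phase s_eq by (simp add: eigencurve_phase_eq)
    then show ?thesis
      using s_eq i phase_denom_boundary by simp
  qed
qed

lemma phase_containing:
  assumes "k \<le> Imax" "m < t k"
  shows "\<exists>i\<in>{1..k}. t (i-1) \<le> m \<and> m < t i"
  using assms
proof (induction k)
  case 0
  then show ?case using t0 by simp
next
  case (Suc k)
  then show ?case by (cases "m < t k") force+
qed

lemma eta_pos_le:
  assumes k: "1 \<le> k" "k \<le> Imax" and m: "m \<le> t k"
  shows "0 < eta m" and "eta m * L \<le> 1"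
proof -
  obtain i where i: "1 \<le> i" "i \<le> Imax" "t (i-1) \<le> m" "m \<le> t i"
  proof (cases "m < t k")
    case True
    then obtain i where "i \<in> {1..k}" "t (i-1) \<le> m" "m < t i"
      using phase_containing[OF k(2)] by blast
    then show ?thesis
      using k that[of i] by simp
  next
    case False
    have "t (k-1) \<le> t k"
      using k by (rule t_pred_le)
    then show ?thesis
      using that[of k] k m False by simp
  qed
  then have eta_m: "eta m = 1 / phase_denom i m" and L_le: "L \<le> phase_denom i m"
    using eta_eq_phase_denom L_le_phase_denom by auto
  then have "0 < phase_denom i m"
    using L_pos by linarith
  then show "0 < eta m" "eta m * L \<le> 1"
    unfolding eta_m using L_le by (simp_all add: field_simps)
qed

lemma reciprocal_eta_Suc_le:
  assumes "k \<le> Imax" "m < t k"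
  shows "1 / eta (Suc m) \<le> 1 / eta m + 2^(k-1) * mu"
proof -
  obtain i where i: "i \<in> {1..k}" "t (i-1) \<le> m" "m < t i"
    using phase_containing[OF assms] by blast
  then have "eta m = 1 / phase_denom i m" "eta (Suc m) = 1 / phase_denom i (Suc m)"
    using assms eta_eq_phase_denom by auto
  moreover have "(2::real)^(i-1) \<le> 2^(k-1)"
    using i(1) by (intro power_increasing) auto
  ultimately show ?thesis
    using mu_pos by (simp add: phase_denom_Suc)
qed

lemma vvar_le_within_phases:
  assumes lam: "0 < lam" "lam \<le> L" and k: "1 \<le> k" "k \<le> Imax" and slope: "2^(k-1) * mu \<le> lam"
  shows "vvar eta lam (t k) \<le> 2 * eta (t k) / lam"
proof (rule vvar_le_of_reciprocal_growth[OF lam(1)])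
  fix m assume "m \<le> t k"
  then show "0 < eta m"
    using eta_pos_le(1)[OF k] by simp
next
  fix m assume "m < t k"
  then have "eta m * L \<le> 1" "0 < eta m"
    using eta_pos_le[OF k] by simp_all
  moreover have "eta m * lam \<le> eta m * L"
    using \<open>0 < eta m\<close> lam(2) by (simp add: mult_left_mono)
  ultimately show "eta m * lam \<le> 1"
    by linarith
next
  fix m assume "m < t k"
  then show "1 / eta (Suc m) \<le> 1 / eta m + lam"
    using reciprocal_eta_Suc_le[OF k(2)] slope by fastforce
qed

end

theorem lemma11:
  fixes H :: "real^'n^'n" and mu L lam :: real and Imax T itil :: nat
    and t :: "nat \<Rightarrow> nat" and eta :: "nat \<Rightarrow> real"
  assumes sym: "transpose H = H"
    and pd: "pos_def_mat H"
    and mu_min: "is_eigenvalue H mu" "\<forall>l. is_eigenvalue H l \<longrightarrow> mu \<le> l"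
    and L_max: "is_eigenvalue H L" "\<forall>l. is_eigenvalue H l \<longrightarrow> l \<le> L"
    and Imax: "L / mu = 2 ^ Imax"
    and t0: "t 0 = 0"
    and t_mono: "\<forall>i<Imax. t i < t (Suc i)"
    and tT: "t Imax = T"
    and eta_phase: "\<forall>i\<in>{1..Imax}. \<forall>s. t (i-1) \<le> s \<and> s < t i \<longrightarrow> eta s = eigencurve_phase L mu t i s"
    and eta_T: "eta T = eigencurve_phase L mu t Imax T"
    and itil: "itil < Imax"
    and lam_eig: "is_eigenvalue H lam"
    and lam_range: "mu * 2 ^ itil \<le> lam" "lam < mu * 2 ^ (itil + 1)"
  shows "vvar eta lam (t (itil + 1)) \<le> 15 * eta (t (itil + 1)) / lam"
proof -
  have mu_pos: "mu > 0" and lam_pos: "lam > 0"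
    using pd mu_min(1) lam_eig by (simp_all add: pos_def_mat_eigenvalue_pos)
  have lam_le_L: "lam \<le> L"
    using L_max(2) lam_eig by blast
  interpret eigencurve_schedule L mu Imax T t eta
    using mu_pos lam_pos lam_le_L t0 t_mono tT eta_phase eta_T by unfold_locales auto
  have "vvar eta lam (t (itil + 1)) \<le> 2 * eta (t (itil + 1)) / lam"
    using itil lam_range(1) by (intro vvar_le_within_phases lam_pos lam_le_L) (simp_all add: mult.commute)
  moreover have "0 < eta (t (itil + 1))"
    using itil by (intro eta_pos_le(1)[of "itil + 1"]) simp_all
  ultimately show ?thesis
    using lam_pos by (smt (verit) divide_right_mono)
qed

end
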